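(* Let $p,q>0$ with $p\neq 1$, $q\neq 1$ and $\frac{\ln p}{\ln q}$ irrational. Let $f$ be a locally integrable function on $\mathbb{R}\setminus\{0\}$ such that $\int_x^{px} f(t)\,dt$ and $\int_x^{qx} f(t)\,dt$ are constant (independent of $x\in\mathbb{R}\setminus\{0\}$). Then there is a constant $c$ such that $f(t)=\frac{c}{t}$ for almost every $t\in\mathbb{R}\setminus\{0\}$. *)

theory Defs
  imports "HOL-Analysis.Analysis"
begin

definition locally_integrable_punctured :: "(real \<Rightarrow> real) \<Rightarrow> bool" where
  "locally_integrable_punctured f \<longleftrightarrow>
     (\<forall>K. compact K \<and> 0 \<notin> K \<longrightarrow> set_integrable lborel K f)"

end

theory Submission
  imports Defs
begin

text \<open>On the positive half-line put \<open>F x = \<integral>\<^sub>1\<^sup>x f\<close> and \<open>H s = F (e\<^sup>s) - c s\<close> with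
\<open>c = A / ln p\<close>. The two dilation hypotheses say that \<open>H\<close> is continuous, \<open>ln p\<close>-periodic
and increases by a constant under the shift by \<open>ln q\<close>. Periodicity makes \<open>H\<close> bounded, so that
constant is zero, and a continuous function with the incommensurable periods \<open>ln p\<close> and
\<open>ln q\<close> is constant by Kronecker's density theorem. Hence \<open>\<integral>\<^sub>u\<^sup>v f = c (ln v - ln u) = \<integral>\<^sub>u\<^sup>v c / t\<close>,
and a function all of whose interval integrals vanish is zero almost everywhere. The
negative half-line reduces to the positive one via \<open>t \<mapsto> - f (- t)\<close>.\<close>

lemma continuous_periodic_bounded:
  fixes H :: "real \<Rightarrow> real"
  assumes cont: "continuous_on UNIV H" and "a \<noteq> 0" and periodic: "\<And>s. H (s + a) = H s"
  shows "bounded (range H)"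
proof -
  interpret periodic_fun_simple H a by standard (rule periodic)
  have "range H \<subseteq> H ` {-\<bar>a\<bar>..\<bar>a\<bar>}"
  proof clarify
    fix s
    have "s = a * frac (s/a) + of_int \<lfloor>s/a\<rfloor> * a"
      using \<open>a \<noteq> 0\<close> by (simp add: frac_def algebra_simps)
    then have "H s = H (a * frac (s/a))" by (metis plus_of_int)
    moreover have "\<bar>a * frac (s/a)\<bar> \<le> \<bar>a\<bar>"
      by (simp add: abs_mult frac_lt_1 frac_ge_0 less_imp_le mult_left_le)
    ultimately show "H s \<in> H ` {-\<bar>a\<bar>..\<bar>a\<bar>}" by (auto simp: abs_le_iff)
  qed
  moreover have "compact (H ` {-\<bar>a\<bar>..\<bar>a\<bar>})"
    by (intro compact_continuous_image continuous_on_subset[OF cont]) auto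
  ultimately show ?thesis using compact_imp_bounded bounded_subset by blast
qed

lemma bounded_shift_increment_eq_0:
  fixes H :: "real \<Rightarrow> real"
  assumes "bounded (range H)" and shift: "\<And>s. H (s + b) = H s + C"
  shows "C = 0"
proof (rule ccontr)
  assume "C \<noteq> 0"
  obtain M where M: "\<And>s. \<bar>H s\<bar> \<le> M" using assms(1) unfolding bounded_iff by auto
  have iterate: "H (real n * b) = H 0 + real n * C" for n
  proof (induction n)
    case (Suc n)
    then show ?case
      using shift[of "real n * b"] by (simp add: distrib_right add.commute add.left_commute)
  qed simp
  obtain n :: nat where "2 * M / \<bar>C\<bar> < real n" using reals_Archimedean2 by blast
  then have "2 * M < \<bar>real n * C\<bar>" using \<open>C \<noteq> 0\<close> by (simp add: field_simps abs_mult)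
  moreover have "\<bar>H (real n * b) - H 0\<bar> \<le> 2 * M" using M[of 0] M[of "real n * b"] by linarith
  ultimately show False using iterate by simp
qed

lemma continuous_incommensurable_periods_const:
  fixes H :: "real \<Rightarrow> real"
  assumes cont: "continuous_on UNIV H" and irrational: "a / b \<notin> \<rat>"
    and period_a: "\<And>s. H (s + a) = H s" and period_b: "\<And>s. H (s + b) = H s"
  shows "H s = H 0"
proof -
  interpret A: periodic_fun_simple H a by standard (rule period_a)
  interpret B: periodic_fun_simple H b by standard (rule period_b)
  have "b \<noteq> 0" using irrational by auto
  have "s \<in> closure {x. H x = H 0}"
    unfolding closure_approachable
  proof (intro allI impI)
    fix e :: real assume "e > 0"
    then obtain h k where "\<bar>of_int k * (a/b) - of_int h - s/b\<bar> < e / \<bar>b\<bar>"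
      using sequence_of_fractional_parts_is_dense[OF irrational, of "e / \<bar>b\<bar>" "s/b"]
        \<open>b \<noteq> 0\<close> by fastforce
    then have "\<bar>b\<bar> * \<bar>of_int k * (a/b) - of_int h - s/b\<bar> < e"
      using \<open>b \<noteq> 0\<close> by (simp add: field_simps)
    then have "dist (of_int k * a - of_int h * b) s < e"
      using \<open>b \<noteq> 0\<close> by (simp add: dist_real_def abs_mult[symmetric] algebra_simps)
    moreover have "H (of_int k * a - of_int h * b) = H 0"
      using A.plus_of_int[of "0 + of_int (-h) * b" k] B.plus_of_int[of 0 "-h"]
      by (simp add: algebra_simps)
    ultimately show "\<exists>y\<in>{x. H x = H 0}. dist y s < e" by blast
  qed
  moreover have "closed {x. H x = H 0}"
    using cont by (intro closed_Collect_eq) auto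
  ultimately show ?thesis by simp
qed

lemma interval_integrable_pos:
  fixes f :: "real \<Rightarrow> real" and u v :: real
  assumes integrable: "\<And>u v. 0 < u \<Longrightarrow> set_integrable lborel {u..v} f" and "0 < u" "0 < v"
  shows "interval_lebesgue_integrable lborel u v f"
proof (cases "u \<le> v")
  case True
  then show ?thesis unfolding interval_lebesgue_integrable_def
    by simp (rule set_integrable_subset[OF integrable[OF \<open>0 < u\<close>, of v]], auto)
next
  case False
  then show ?thesis unfolding interval_lebesgue_integrable_def
    by simp (rule set_integrable_subset[OF integrable[OF \<open>0 < v\<close>, of u]], auto)
qed

lemma interval_integral_sum_pos:
  fixes f :: "real \<Rightarrow> real" and u v w :: real
  assumes integrable: "\<And>u v. 0 < u \<Longrightarrow> set_integrable lborel {u..v} f"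
    and "0 < u" "0 < v" "0 < w"
  shows "(LBINT t=u..v. f t) + (LBINT t=v..w. f t) = (LBINT t=u..w. f t)"
proof (rule interval_integral_sum)
  have "interval_lebesgue_integrable lborel (min u (min v w)) (max u (max v w)) f"
    using assms
    by (intro interval_integrable_pos[OF integrable]) (simp_all add: less_max_iff_disj)
  then show "interval_lebesgue_integrable lborel
      (min (ereal u) (min (ereal v) (ereal w))) (max (ereal u) (max (ereal v) (ereal w))) f"
    by simp
qed

lemma isCont_interval_integral_pos:
  fixes f :: "real \<Rightarrow> real" and b x :: real
  assumes integrable: "\<And>u v. 0 < u \<Longrightarrow> set_integrable lborel {u..v} f"
    and "0 < b" "0 < x"
  shows "isCont (\<lambda>y::real. LBINT t=b..y. f t) x"
proof -
  have "f integrable_on {x/2..2*x}"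
    using set_borel_integral_eq_integral(1)[OF integrable] \<open>0 < x\<close> by auto
  then have "continuous_on {x/2..2*x} (\<lambda>y. (LBINT t=b..x/2. f t) + integral {x/2..y} f)"
    by (intro continuous_intros indefinite_integral_continuous_1)
  moreover have "(LBINT t=b..x/2. f t) + integral {x/2..y} f = (LBINT t=b..y. f t)"
    if "y \<in> {x/2..2*x}" for y
    using that assms interval_integral_sum_pos[OF integrable, of b "x/2" y]
      interval_integral_eq_integral[of "x/2" y f] by (auto intro: integrable)
  ultimately have "continuous_on {x/2..2*x} (\<lambda>y. LBINT t=b..y. f t)"
    by (rule continuous_on_eq)
  then show ?thesis by (rule continuous_on_interior) (use \<open>0 < x\<close> in auto)
qed

lemma interval_integral_inverse:
  fixes c u v :: real
  assumes "0 < u" "0 < v"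
  shows "(LBINT t=u..v. c / t) = c * (ln v - ln u)"
proof -
  have "(LBINT t=u..v. c / t) = c * ln v - c * ln u"
  proof (rule interval_integral_FTC_finite)
    show "continuous_on {min u v..max u v} (\<lambda>t. c / t)"
      using assms by (intro continuous_intros) auto
    fix x assume "min u v \<le> x" "x \<le> max u v"
    then have "x > 0" using assms by auto
    then show "((\<lambda>t. c * ln t) has_vector_derivative c / x) (at x within {min u v..max u v})"
      by (auto intro!: derivative_eq_intros
          simp: has_real_derivative_iff_has_vector_derivative[symmetric] field_simps)
  qed
  then show ?thesis by (simp add: algebra_simps)
qed

lemma AE_eq_0_of_set_integral_Ioi_eq_0:
  fixes g :: "real \<Rightarrow> real"
  assumes integrable: "integrable lborel g" and zero: "\<And>x. (LBINT t:{x<..}. g t) = 0"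
  shows "AE t in lborel. g t = 0"
proof -
  have [measurable]: "g \<in> borel_measurable lborel" using integrable by auto
  have finite_Ioi: "(\<integral>\<^sup>+t. ennreal (g t) * indicator {x<..} t \<partial>lborel) < \<infinity>" for x
  proof -
    have "(\<integral>\<^sup>+t. ennreal (g t) * indicator {x<..} t \<partial>lborel)
        \<le> (\<integral>\<^sup>+t. ennreal (g t) \<partial>lborel)"
      by (intro nn_integral_mono) (auto split: split_indicator)
    also have "\<dots> < \<infinity>" using integrableD(2)[OF integrable] by (simp add: less_top)
    finally show ?thesis .
  qed
  have parts_eq: "(\<integral>\<^sup>+t. ennreal (g t) * indicator {x<..} t \<partial>lborel)
      = (\<integral>\<^sup>+t. ennreal (- g t) * indicator {x<..} t \<partial>lborel)" for x
  proof -
    let ?h = "\<lambda>t. g t * indicator {x<..} t"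
    have h: "integrable lborel ?h" using integrable by (intro integrable_real_mult_indicator) auto
    have "integral\<^sup>L lborel ?h = 0"
      using zero[of x] unfolding set_lebesgue_integral_def by (simp add: mult.commute)
    then have "enn2real (\<integral>\<^sup>+t. ennreal (?h t) \<partial>lborel)
        = enn2real (\<integral>\<^sup>+t. ennreal (- ?h t) \<partial>lborel)"
      using real_lebesgue_integral_def[OF h] by simp
    moreover have "(\<integral>\<^sup>+t. ennreal (?h t) \<partial>lborel) < top"
      "(\<integral>\<^sup>+t. ennreal (- ?h t) \<partial>lborel) < top"
      using integrableD(2)[OF h] integrableD(2)[OF integrable_minus[OF h]]
      by (simp_all add: less_top)
    ultimately have "(\<integral>\<^sup>+t. ennreal (?h t) \<partial>lborel) = (\<integral>\<^sup>+t. ennreal (- ?h t) \<partial>lborel)"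
      by (metis ennreal_enn2real)
    moreover have "ennreal (?h t) = ennreal (g t) * indicator {x<..} t"
      and "ennreal (- ?h t) = ennreal (- g t) * indicator {x<..} t" for t
      by (auto split: split_indicator)
    ultimately show ?thesis by simp
  qed
  have "density lborel (\<lambda>t. ennreal (g t)) = density lborel (\<lambda>t. ennreal (- g t))"
  proof (rule measure_eqI_lessThan)
    fix x :: real
    show "emeasure (density lborel (\<lambda>t. ennreal (g t))) {x<..} < \<infinity>"
      using finite_Ioi[of x] by (simp add: emeasure_density)
    show "emeasure (density lborel (\<lambda>t. ennreal (g t))) {x<..}
        = emeasure (density lborel (\<lambda>t. ennreal (- g t))) {x<..}"
      using parts_eq[of x] by (simp add: emeasure_density)
  qed simp_all
  then have "AE t in lborel. ennreal (g t) = ennreal (- g t)"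
    by (intro sigma_finite_measure.density_unique[OF sigma_finite_lborel]) auto
  then show ?thesis
  proof eventually_elim
    case (elim t)
    then show ?case by (cases "g t \<ge> 0") (auto simp: ennreal_neg)
  qed
qed

lemma AE_eq_0_on_Icc_of_interval_integral_eq_0:
  fixes g :: "real \<Rightarrow> real" and a b :: real
  assumes "a \<le> b" and integrable: "set_integrable lborel {a..b} g"
    and zero: "\<And>u v. a \<le> u \<Longrightarrow> u \<le> v \<Longrightarrow> v \<le> b \<Longrightarrow> (LBINT t=u..v. g t) = 0"
  shows "AE t in lborel. t \<in> {a..b} \<longrightarrow> g t = 0"
proof -
  have "(LBINT t:{x<..}. indicator {a..b} t * g t) = 0" for x
  proof -
    define m where "m = min b (max x a)"
    have "a \<le> m" "m \<le> b" using \<open>a \<le> b\<close> by (auto simp: m_def)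
    have "(LBINT t:{x<..}. indicator {a..b} t * g t) = (LBINT t:{m<..b}. g t)"
      unfolding set_lebesgue_integral_def
      by (rule integral_discrete_difference[where X="{a}"])
        (auto simp: m_def split: split_indicator)
    also have "\<dots> = (LBINT t=m..b. g t)"
      using \<open>m \<le> b\<close> by (simp add: interval_integral_Ioc)
    also have "\<dots> = 0" using \<open>a \<le> m\<close> \<open>m \<le> b\<close> by (intro zero) auto
    finally show ?thesis .
  qed
  moreover have "integrable lborel (\<lambda>t. indicator {a..b} t * g t)"
    using integrable by (simp add: set_integrable_def)
  ultimately have "AE t in lborel. indicator {a..b} t * g t = 0"
    by (rule AE_eq_0_of_set_integral_Ioi_eq_0[rotated])
  then show ?thesis by eventually_elim (auto split: split_indicator)
qed

lemma AE_eq_0_on_pos_of_interval_integral_eq_0: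
  fixes g :: "real \<Rightarrow> real"
  assumes integrable: "\<And>u v. 0 < u \<Longrightarrow> set_integrable lborel {u..v} g"
    and zero: "\<And>u v. 0 < (u::real) \<Longrightarrow> u \<le> (v::real) \<Longrightarrow> (LBINT t=u..v. g t) = 0"
  shows "AE t in lborel. 0 < t \<longrightarrow> g t = 0"
proof -
  have "AE t in lborel. t \<in> {1 / Suc n..Suc n} \<longrightarrow> g t = 0" for n :: nat
  proof (rule AE_eq_0_on_Icc_of_interval_integral_eq_0)
    have pos: "0 < 1 / real (Suc n)" by simp
    then show "set_integrable lborel {1 / real (Suc n)..real (Suc n)} g" by (rule integrable)
    show "(LBINT t=u..v. g t) = 0" if "1 / real (Suc n) \<le> u" "u \<le> v" for u v
      using zero[OF order.strict_trans2[OF pos that(1)] that(2)] .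
  qed (simp add: field_simps)
  then have "AE t in lborel. \<forall>n::nat. t \<in> {1 / Suc n..Suc n} \<longrightarrow> g t = 0"
    by (subst AE_all_countable) blast
  then show ?thesis
  proof eventually_elim
    case (elim t)
    show ?case
    proof
      assume "0 < t"
      obtain n :: nat where n: "max t (1 / t) < n" using reals_Archimedean2 by blast
      then have "1 < t * n" using \<open>0 < t\<close> by (simp add: field_simps)
      then have "t \<in> {1 / Suc n..Suc n}"
        using n \<open>0 < t\<close> by (simp add: field_simps)
      then show "g t = 0" using elim by blast
    qed
  qed
qed

lemma interval_integral_log_of_dilation_invariant:
  fixes p q A B u v :: real and f :: "real \<Rightarrow> real"
  assumes "0 < p" "p \<noteq> 1" "0 < q" "q \<noteq> 1" and irrational: "ln p / ln q \<notin> \<rat>"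
    and integrable: "\<And>u v. 0 < u \<Longrightarrow> set_integrable lborel {u..v} f"
    and dilation_p: "\<And>x. 0 < x \<Longrightarrow> (LBINT t=x..p*x. f t) = A"
    and dilation_q: "\<And>x. 0 < x \<Longrightarrow> (LBINT t=x..q*x. f t) = B"
    and "0 < u" "0 < v"
  shows "(LBINT t=u..v. f t) = A / ln p * (ln v - ln u)"
proof -
  define c where "c = A / ln p"
  define F where "F x = (LBINT t=ereal 1..ereal x. f t)" for x :: real
  define H where "H s = F (exp s) - c * s" for s
  have F_diff: "(LBINT t=x..y. f t) = F y - F x" if "0 < x" "0 < y" for x y :: real
    using interval_integral_sum_pos[OF integrable, of 1 x y] that unfolding F_def by simp
  have continuous: "continuous_on UNIV H"
    unfolding H_def F_def
    by (intro continuous_at_imp_continuous_on ballI continuous_intros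
        isCont_o2[OF isCont_exp isCont_interval_integral_pos[OF integrable]]) auto
  have period_p: "H (s + ln p) = H s" for s
    using dilation_p[of "exp s"] F_diff[of "exp s" "p * exp s"] \<open>0 < p\<close> \<open>p \<noteq> 1\<close>
    by (simp add: H_def c_def exp_add field_simps)
  have shift_q: "H (s + ln q) = H s + (B - c * ln q)" for s
    using dilation_q[of "exp s"] F_diff[of "exp s" "q * exp s"] \<open>0 < q\<close>
    by (simp add: H_def exp_add algebra_simps)
  have "bounded (range H)"
    using \<open>0 < p\<close> \<open>p \<noteq> 1\<close>
    by (intro continuous_periodic_bounded[OF continuous _ period_p]) simp
  then have "B - c * ln q = 0" using shift_q by (rule bounded_shift_increment_eq_0)
  then have "H (s + ln q) = H s" for s using shift_q by simp
  then have H_const: "H s = H 0" for s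
    using continuous_incommensurable_periods_const[OF continuous irrational period_p] by blast
  have "F x = H 0 + c * ln x" if "0 < x" for x
    using H_const[of "ln x"] that by (simp add: H_def)
  then show ?thesis using F_diff \<open>0 < u\<close> \<open>0 < v\<close> by (simp add: c_def algebra_simps)
qed

lemma AE_eq_inverse_on_pos_of_dilation_invariant:
  fixes p q A B :: real and f :: "real \<Rightarrow> real"
  assumes "0 < p" "p \<noteq> 1" "0 < q" "q \<noteq> 1" and "ln p / ln q \<notin> \<rat>"
    and integrable: "\<And>u v. 0 < u \<Longrightarrow> set_integrable lborel {u..v} f"
    and "\<And>x. 0 < x \<Longrightarrow> (LBINT t=x..p*x. f t) = A"
    and "\<And>x. 0 < x \<Longrightarrow> (LBINT t=x..q*x. f t) = B"
  shows "AE t in lborel. 0 < t \<longrightarrow> f t = A / ln p / t"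
proof -
  have inverse_integrable: "set_integrable lborel {u..v} (\<lambda>t. A / ln p / t)"
    if "0 < u" for u v :: real
    using that by (intro borel_integrable_atLeastAtMost' continuous_intros) auto
  have "AE t in lborel. 0 < t \<longrightarrow> f t - A / ln p / t = 0"
  proof (rule AE_eq_0_on_pos_of_interval_integral_eq_0)
    show "set_integrable lborel {u..v} (\<lambda>t. f t - A / ln p / t)" if "0 < u" for u v
      using that by (intro set_integral_diff(1) integrable inverse_integrable)
    fix u v :: real assume "0 < u" "u \<le> v"
    then have "(LBINT t=u..v. f t - A / ln p / t)
        = (LBINT t=u..v. f t) - (LBINT t=u..v. A / ln p / t)"
      by (intro interval_lebesgue_integral_diff(2) interval_integrable_pos integrable
          inverse_integrable) auto
    also have "\<dots> = 0"
      using interval_integral_log_of_dilation_invariant[OF assms]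
        interval_integral_inverse[of u v "A / ln p"] \<open>0 < u\<close> \<open>u \<le> v\<close> by simp
    finally show "(LBINT t=u..v. f t - A / ln p / t) = 0" .
  qed
  then show ?thesis by eventually_elim simp
qed

lemma locally_integrable_punctured_reflect:
  assumes "locally_integrable_punctured f"
  shows "locally_integrable_punctured (\<lambda>t. - f (- t))"
  unfolding locally_integrable_punctured_def
proof (intro allI impI)
  fix K :: "real set" assume "compact K \<and> 0 \<notin> K"
  then have "set_integrable lborel (uminus ` K) f"
    using assms compact_negations unfolding locally_integrable_punctured_def by force
  then have "integrable lborel (\<lambda>x. indicator (uminus ` K) (0 + -1 * x) *\<^sub>R f (0 + -1 * x))"
    unfolding set_integrable_def by (subst lborel_integrable_real_affine_iff) auto
  moreover have "indicator (uminus ` K) (- x) = (indicator K x :: real)" for x :: real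
    by (auto simp: indicator_def image_iff)
  ultimately show "set_integrable lborel K (\<lambda>t. - f (- t))"
    unfolding set_integrable_def by (auto dest: integrable_minus)
qed

lemma interval_integral_dilation_reflect:
  fixes f :: "real \<Rightarrow> real" and r x :: real
  shows "(LBINT t=x..r*x. - f (- t)) = (LBINT t=-x..r*(-x). f t)"
proof -
  have "(LBINT t=-x..r*(-x). f t) = (LBINT t=ereal (r*x)..ereal x. f (- t))"
    using interval_integral_reflect[of "ereal (-x)" "ereal (r*(-x))" f] by simp
  also have "\<dots> = (LBINT t=ereal x..ereal (r*x). - f (- t))"
    by (simp add: interval_integral_endpoints_reverse[of _ x] interval_lebesgue_integral_uminus)
  finally show ?thesis by simp
qed

lemma AE_lborel_reflect:
  assumes "AE x in lborel. P (x::real)"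
  shows "AE x in lborel. P (- x)"
proof -
  obtain N where N: "\<And>x. x \<in> space lborel - N \<Longrightarrow> P x" "N \<in> null_sets lborel"
    using AE_E3[OF assms] by blast
  have "N \<in> sets borel" using N(2) by auto
  then have "uminus -` N \<in> sets borel"
    and "emeasure lborel (uminus -` N) = emeasure (distr lborel borel uminus) N"
    using measurable_sets_borel[of uminus borel N] by (simp_all add: emeasure_distr)
  then have "uminus -` N \<in> null_sets lborel"
    using N(2) by (simp add: lborel_distr_uminus null_sets_def)
  then show ?thesis by (rule AE_I') (use N in auto)
qed

theorem mainTheorem4:
  fixes p q :: real and f :: "real \<Rightarrow> real"
  assumes "p > 0" and "q > 0" and "p \<noteq> 1" and "q \<noteq> 1"
    and "ln p / ln q \<notin> \<rat>"
    and "locally_integrable_punctured f"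
    and "\<exists>A. \<forall>x. x \<noteq> 0 \<longrightarrow> (LBINT t=x..p*x. f t) = A"
    and "\<exists>B. \<forall>x. x \<noteq> 0 \<longrightarrow> (LBINT t=x..q*x. f t) = B"
  shows "\<exists>c. AE t in lborel. t \<noteq> 0 \<longrightarrow> f t = c / t"
proof -
  obtain A where A: "\<And>x. x \<noteq> 0 \<Longrightarrow> (LBINT t=x..p*x. f t) = A" using assms(7) by blast
  obtain B where B: "\<And>x. x \<noteq> 0 \<Longrightarrow> (LBINT t=x..q*x. f t) = B" using assms(8) by blast
  have Icc_integrable: "set_integrable lborel {u..v} g"
    if "locally_integrable_punctured g" "0 < u" for g :: "real \<Rightarrow> real" and u v :: real
    using that unfolding locally_integrable_punctured_def by auto
  note half_line = AE_eq_inverse_on_pos_of_dilation_invariant[OF assms(1,3,2,4,5) Icc_integrable]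
  have pos: "AE t in lborel. 0 < t \<longrightarrow> f t = A / ln p / t"
    using assms(6) A B by (intro half_line) auto
  have "(LBINT t=x..p*x. - f (- t)) = A" "(LBINT t=x..q*x. - f (- t)) = B" if "0 < x" for x
    using A[of "-x"] B[of "-x"] that by (simp_all add: interval_integral_dilation_reflect)
  then have "AE t in lborel. 0 < t \<longrightarrow> - f (- t) = A / ln p / t"
    using locally_integrable_punctured_reflect[OF assms(6)] by (intro half_line)
  then have neg: "AE t in lborel. t < 0 \<longrightarrow> f t = A / ln p / t"
    by (rule AE_lborel_reflect[THEN eventually_mono]) (auto simp: field_simps)
  from pos neg have "AE t in lborel. t \<noteq> 0 \<longrightarrow> f t = A / ln p / t"
    by eventually_elim (auto simp: neq_iff)
  then show ?thesis by blast
qed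

end
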